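(* Assume $N>2m$, where $m=\max_{i\in\mathcal{B}}r_i$, and let $\delta=N/m$. Let $p=\sum_{i}v_ix_i$ be the value of the output of Algorithm 1 (described below), and let $\mathrm{OPT}$ be the optimal value of the WDP. Then $p\ge \alpha\cdot\mathrm{OPT}$, where $\alpha=\frac{\delta-2}{\delta e-2}$.
   Context: Setting: a finite set of bidders $\mathcal{B}=\mathcal{B}_r\cup\mathcal{B}_u$ (disjoint), indexed $1,\dots,|\mathcal{B}|$, and $N$ resource blocks $k=1,\dots,N$. Each bidder $i$ has a bid $(r_i,v_i)$ with $r_i$ a positive integer and $v_i\ge 0$. The WDP is: maximize $\sum_i v_i x_i$ subject to $\sum_k a_{ik}=r_ix_i$ for $1\le i\le|\mathcal{B}|$; $\sum_{i=1}^{|\mathcal{B}|+1}a_{ik}\le1$ for all $k$; $\sum_k a_{ik}\le\sum_k a_{|\mathcal{B}|+1,k}$ for $i\in\mathcal{B}_r$; $a_{ik},x_i\in\{0,1\}$. The index $|\mathcal{B}|+1$ denotes reserved RBs. Algorithm 1: 1. Initialize $x_i=0$ for all $i$, $\mathcal{C}=\emptyset$, $p=0$, $t=0$, $\lambda^0=1/N$. 2. While $\mathcal{C}\ne\mathcal{B}$ and $N\lambda^t\le\exp(\delta-2)$: (a) pick $\mu=\arg\max_{i\in\mathcal{B}\setminus\mathcal{C}}v_i/r_i$; (b) set $x_\mu=1$, $p\leftarrow p+v_\mu$ and $\mathcal{C}\leftarrow\mathcal{C}\cup\{\mu\}$; (c) set $\lambda^{t+1}=\lambda^t\exp(\delta-2)^{r_\mu/(N-2m)}$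 and $t\leftarrow t+1$. *)

theory Defs
  imports Complex_Main
begin

text \<open>Bidders are 1..n (n = |B|), resource blocks are 1..N, index n+1 denotes
  reserved RBs. Br is the set of bidders in B_r; B_u = {1..n} - Br.\<close>

definition wdp_feasible ::
  "nat \<Rightarrow> nat \<Rightarrow> nat set \<Rightarrow> (nat \<Rightarrow> nat) \<Rightarrow> (nat \<Rightarrow> nat \<Rightarrow> nat) \<Rightarrow> (nat \<Rightarrow> nat) \<Rightarrow> bool" where
  "wdp_feasible n N Br r a x \<longleftrightarrow>
     (\<forall>i\<in>{1..n+1}. \<forall>k\<in>{1..N}. a i k \<in> {0,1}) \<and>
     (\<forall>i\<in>{1..n}. x i \<in> {0,1}) \<and>
     (\<forall>i\<in>{1..n}. (\<Sum>k=1..N. a i k) = r i * x i) \<and>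
     (\<forall>k\<in>{1..N}. (\<Sum>i=1..n+1. a i k) \<le> 1) \<and>
     (\<forall>i\<in>Br. (\<Sum>k=1..N. a i k) \<le> (\<Sum>k=1..N. a (n+1) k))"

definition wdp_value :: "nat \<Rightarrow> (nat \<Rightarrow> real) \<Rightarrow> (nat \<Rightarrow> nat) \<Rightarrow> real" where
  "wdp_value n v x = (\<Sum>i=1..n. v i * real (x i))"

definition wdp_opt ::
  "nat \<Rightarrow> nat \<Rightarrow> nat set \<Rightarrow> (nat \<Rightarrow> nat) \<Rightarrow> (nat \<Rightarrow> real) \<Rightarrow> real" where
  "wdp_opt n N Br r v = Sup {wdp_value n v x | a x. wdp_feasible n N Br r a x}"

definition max_req :: "nat \<Rightarrow> (nat \<Rightarrow> nat) \<Rightarrow> nat" where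
  "max_req n r = Max (r ` {1..n})"

definition delta :: "nat \<Rightarrow> nat \<Rightarrow> (nat \<Rightarrow> nat) \<Rightarrow> real" where
  "delta n N r = real N / real (max_req n r)"

fun alg_lambda :: "nat \<Rightarrow> nat \<Rightarrow> (nat \<Rightarrow> nat) \<Rightarrow> nat list \<Rightarrow> nat \<Rightarrow> real" where
  "alg_lambda n N r mus 0 = 1 / real N"
| "alg_lambda n N r mus (Suc t) =
     alg_lambda n N r mus t *
     exp (delta n N r - 2) powr (real (r (mus ! t)) / (real N - 2 * real (max_req n r)))"

text \<open>mus is a complete execution of Algorithm 1: the t-th iteration is entered
  (loop condition holds), picks an argmax of v_i/r_i among unchosen bidders
  (arbitrary tie-breaking), and after the last iteration the loop condition fails.\<close>
definition alg1_run ::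
  "nat \<Rightarrow> nat \<Rightarrow> (nat \<Rightarrow> nat) \<Rightarrow> (nat \<Rightarrow> real) \<Rightarrow> nat list \<Rightarrow> bool" where
  "alg1_run n N r v mus \<longleftrightarrow>
     (\<forall>t < length mus.
        set (take t mus) \<noteq> {1..n} \<and>
        real N * alg_lambda n N r mus t \<le> exp (delta n N r - 2) \<and>
        mus ! t \<in> {1..n} - set (take t mus) \<and>
        (\<forall>j \<in> {1..n} - set (take t mus). v j / real (r j) \<le> v (mus ! t) / real (r (mus ! t)))) \<and>
     \<not> (set mus \<noteq> {1..n} \<and>
        real N * alg_lambda n N r mus (length mus) \<le> exp (delta n N r - 2))"

definition alg1_x :: "nat list \<Rightarrow> nat \<Rightarrow> nat" where
  "alg1_x mus i = (if i \<in> set mus then 1 else 0)"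

end

theory Submission
  imports Defs
begin

text \<open>Let \<open>S\<close> be the set of chosen bidders and \<open>c = N - 2m\<close>. If every bidder is chosen, \<open>p\<close> is
  already optimal. Otherwise the loop stopped because \<open>N \<lambda>\<close> exceeded \<open>exp (\<delta> - 2)\<close>; since
  \<open>N \<lambda> = exp ((\<delta> - 2) R / c)\<close> where \<open>R\<close> is the demand of \<open>S\<close>, this means \<open>R > c\<close>.
  The value density \<open>d\<close> of the last chosen bidder separates chosen from unchosen bidders, so
  by the LP-duality argument for fractional knapsacks every allocation using at most \<open>N\<close> blocks
  is worth at most \<open>p + d (N - R) \<le> p N / c\<close>. Finally \<open>\<alpha> \<le> (\<delta> - 2) / \<delta> = c / N\<close>.\<close>

lemma fractional_knapsack_threshold_bound:
  fixes v w x :: "'a \<Rightarrow> real"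
  assumes "finite I" "S \<subseteq> I"
    and x_range: "\<forall>i\<in>I. 0 \<le> x i \<and> x i \<le> 1"
    and capacity: "(\<Sum>i\<in>I. w i * x i) \<le> C"
    and above: "\<forall>i\<in>S. d * w i \<le> v i"
    and below: "\<forall>i\<in>I - S. v i \<le> d * w i"
    and "0 \<le> d"
  shows "(\<Sum>i\<in>I. v i * x i) \<le> sum v S + d * (C - sum w S)"
proof -
  let ?slack = "\<lambda>i. if i \<in> S then v i - d * w i else 0"
  have "(\<Sum>i\<in>I. v i * x i) \<le> (\<Sum>i\<in>I. ?slack i + d * (w i * x i))"
  proof (rule sum_mono)
    fix i assume "i \<in> I"
    show "v i * x i \<le> ?slack i + d * (w i * x i)"
    proof (cases "i \<in> S")
      case True
      then have "(v i - d * w i) * x i \<le> v i - d * w i"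
        using above x_range \<open>i \<in> I\<close> by (simp add: mult_left_le)
      then show ?thesis using True by (simp add: algebra_simps)
    next
      case False
      then have "v i * x i \<le> (d * w i) * x i"
        using below x_range \<open>i \<in> I\<close> by (intro mult_right_mono) auto
      then show ?thesis using False by (simp add: mult.assoc)
    qed
  qed
  also have "\<dots> = (\<Sum>i\<in>S. v i - d * w i) + d * (\<Sum>i\<in>I. w i * x i)"
    using sum.inter_restrict[OF \<open>finite I\<close>, of "\<lambda>i. v i - d * w i" S] \<open>S \<subseteq> I\<close>
    by (simp add: sum.distrib sum_distrib_left Int_absorb1)
  also have "\<dots> \<le> (\<Sum>i\<in>S. v i - d * w i) + d * C"
    using capacity \<open>0 \<le> d\<close> by (simp add: mult_left_mono)
  also have "\<dots> = sum v S + d * (C - sum w S)"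
    by (simp add: sum_subtractf sum_distrib_left algebra_simps)
  finally show ?thesis .
qed

lemma threshold_excess_le_scaled:
  fixes p d R C c :: real
  assumes "0 \<le> d" "d * R \<le> p" "0 < c" "c < R" "c \<le> C"
  shows "p + d * (C - R) \<le> p * C / c"
proof -
  have "0 \<le> d * R" using assms by simp
  then have "0 \<le> p" using assms by linarith
  consider "R \<le> C" | "C < R" by linarith
  then have "(p + d * (C - R)) * c \<le> p * C"
  proof cases
    case 1
    have "(p + d * (C - R)) * R \<le> (p + d * (C - R)) * R + (p - d * R) * (C - R)"
      using 1 assms by simp
    also have "\<dots> = p * C" by (simp add: algebra_simps)
    finally have "(p + d * (C - R)) * R \<le> p * C" .
    moreover have "(p + d * (C - R)) * c \<le> (p + d * (C - R)) * R"
      using 1 assms \<open>0 \<le> p\<close> by (intro mult_left_mono) auto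
    ultimately show ?thesis by linarith
  next
    case 2
    then have "p + d * (C - R) \<le> p"
      using assms by (simp add: mult_nonneg_nonpos)
    then show ?thesis
      using assms \<open>0 \<le> p\<close> by (intro mult_mono) auto
  qed
  then show ?thesis using \<open>0 < c\<close> by (simp add: field_simps)
qed

lemma wdp_feasible_binary:
  assumes "wdp_feasible n N Br r a x" "i \<in> {1..n}"
  shows "x i \<in> {0, 1}"
  using assms unfolding wdp_feasible_def by auto

lemma wdp_feasible_capacity:
  assumes "wdp_feasible n N Br r a x"
  shows "(\<Sum>i=1..n. r i * x i) \<le> N"
proof -
  have alloc: "\<forall>i\<in>{1..n}. (\<Sum>k=1..N. a i k) = r i * x i"
    and disjoint: "\<forall>k\<in>{1..N}. (\<Sum>i=1..n+1. a i k) \<le> 1"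
    using assms unfolding wdp_feasible_def by auto
  have "(\<Sum>i=1..n. r i * x i) = (\<Sum>i=1..n. \<Sum>k=1..N. a i k)"
    using alloc by simp
  also have "\<dots> = (\<Sum>k=1..N. \<Sum>i=1..n. a i k)"
    by (rule sum.swap)
  also have "\<dots> \<le> (\<Sum>k=1..N. \<Sum>i=1..n+1. a i k)"
    by (intro sum_mono sum_mono2) auto
  also have "\<dots> \<le> (\<Sum>k=1..N. 1)"
    using disjoint by (intro sum_mono) auto
  finally show ?thesis by simp
qed

lemma wdp_opt_le:
  assumes "\<And>a x. wdp_feasible n N Br r a x \<Longrightarrow> wdp_value n v x \<le> B"
  shows "wdp_opt n N Br r v \<le> B"
proof -
  have "wdp_feasible n N Br r (\<lambda>i k. 0) (\<lambda>i. 0)"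
    unfolding wdp_feasible_def by auto
  then show ?thesis
    unfolding wdp_opt_def using assms by (intro cSup_least) auto
qed

lemma wdp_value_alg1_x:
  assumes "set mus \<subseteq> {1..n}"
  shows "wdp_value n v (alg1_x mus) = sum v (set mus)"
proof -
  have "wdp_value n v (alg1_x mus) = (\<Sum>i\<in>{1..n}. if i \<in> set mus then v i else 0)"
    unfolding wdp_value_def alg1_x_def by (intro sum.cong) auto
  also have "\<dots> = sum v (set mus)"
    using sum.inter_restrict[of "{1..n}" v "set mus"] assms by (simp add: Int_absorb1)
  finally show ?thesis .
qed

lemma alg_lambda_closed_form:
  "alg_lambda n N r mus t =
     exp ((delta n N r - 2) * (\<Sum>j<t. real (r (mus ! j))) / (real N - 2 * real (max_req n r)))
       / real N"
proof (induction t)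
  case 0
  then show ?case by simp
next
  case (Suc t)
  have "exp (delta n N r - 2) powr (real (r (mus ! t)) / (real N - 2 * real (max_req n r)))
        = exp ((delta n N r - 2) * real (r (mus ! t)) / (real N - 2 * real (max_req n r)))"
    by (simp add: powr_def)
  then show ?case using Suc
    by (simp add: exp_add[symmetric] add_divide_distrib distrib_left)
qed

lemma max_req_pos:
  assumes "n \<ge> 1" "\<forall>i\<in>{1..n}. r i > 0"
  shows "max_req n r > 0"
proof -
  have "r 1 \<le> max_req n r"
    unfolding max_req_def using assms(1) by (intro Max_ge) auto
  moreover have "r 1 > 0" using assms by auto
  ultimately show ?thesis by linarith
qed

lemma delta_gt_two:
  assumes "max_req n r > 0" "N > 2 * max_req n r"
  shows "delta n N r > 2"
  using assms unfolding delta_def by (simp add: field_simps)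

lemma alg1_run_step:
  assumes "alg1_run n N r v mus" "t < length mus"
  shows "mus ! t \<in> {1..n} - set (take t mus)"
    and "\<And>j. j \<in> {1..n} - set (take t mus) \<Longrightarrow> v j / real (r j) \<le> v (mus ! t) / real (r (mus ! t))"
  using assms unfolding alg1_run_def by blast+

lemma alg1_run_chosen_subset:
  assumes "alg1_run n N r v mus"
  shows "set mus \<subseteq> {1..n}"
  using alg1_run_step(1)[OF assms] by (auto simp: in_set_conv_nth)

lemma alg1_run_distinct:
  assumes "alg1_run n N r v mus"
  shows "distinct mus"
  unfolding distinct_conv_nth
proof (intro allI impI)
  fix i j assume "i < length mus" "j < length mus" "i \<noteq> j"
  then consider "i < j" | "j < i" by linarith
  then show "mus ! i \<noteq> mus ! j"
  proof cases
    case 1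
    then have "mus ! i \<in> set (take j mus)" using \<open>j < length mus\<close> by (auto simp: in_set_conv_nth)
    then show ?thesis using alg1_run_step(1)[OF assms \<open>j < length mus\<close>] by auto
  next
    case 2
    then have "mus ! j \<in> set (take i mus)" using \<open>i < length mus\<close> by (auto simp: in_set_conv_nth)
    then show ?thesis using alg1_run_step(1)[OF assms \<open>i < length mus\<close>] by auto
  qed
qed

lemma alg1_run_last_density_le:
  assumes run: "alg1_run n N r v mus" and "i \<in> set mus"
  shows "v (last mus) / real (r (last mus)) \<le> v i / real (r i)"
proof -
  obtain t where t: "t < length mus" "i = mus ! t"
    using \<open>i \<in> set mus\<close> by (auto simp: in_set_conv_nth)
  have last: "last mus = mus ! (length mus - 1)"
    using t by (intro last_conv_nth) auto
  show ?thesis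
  proof (cases "t = length mus - 1")
    case True
    then show ?thesis using t last by simp
  next
    case False
    then have "last mus \<notin> set (take t mus)"
      using alg1_run_distinct[OF run] t
      by (auto simp: last in_set_conv_nth nth_eq_iff_index_eq)
    moreover have "last mus \<in> {1..n}"
      using alg1_run_chosen_subset[OF run] t by (metis last_in_set list.size(3) not_less0 subsetD)
    ultimately show ?thesis
      using alg1_run_step(2)[OF run \<open>t < length mus\<close>] t by auto
  qed
qed

lemma alg1_run_density_le_last:
  assumes run: "alg1_run n N r v mus" and "mus \<noteq> []" and "j \<in> {1..n} - set mus"
  shows "v j / real (r j) \<le> v (last mus) / real (r (last mus))"
proof -
  have "j \<in> {1..n} - set (take (length mus - 1) mus)"
    using assms(3) set_take_subset by fastforce
  then show ?thesis
    using alg1_run_step(2)[OF run, of "length mus - 1"] \<open>mus \<noteq> []\<close> by (simp add: last_conv_nth)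
qed

lemma alg1_run_stopped_demand:
  assumes run: "alg1_run n N r v mus"
    and "max_req n r > 0" "N > 2 * max_req n r"
    and "set mus \<noteq> {1..n}"
  shows "real N - 2 * real (max_req n r) < (\<Sum>i\<in>set mus. real (r i))"
proof -
  define c where "c = real N - 2 * real (max_req n r)"
  define D where "D = delta n N r"
  have "c > 0" using assms(3) unfolding c_def by linarith
  have "D > 2" using delta_gt_two[OF assms(2,3)] unfolding D_def .
  have "(\<Sum>j<length mus. real (r (mus ! j))) = (\<Sum>i\<in>set mus. real (r i))"
    using alg1_run_distinct[OF run]
    by (simp add: sum_list_sum_nth lessThan_atLeast0 flip: sum_list_distinct_conv_sum_set)
  then have "real N * alg_lambda n N r mus (length mus)
             = exp ((D - 2) * (\<Sum>i\<in>set mus. real (r i)) / c)"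
    using \<open>c > 0\<close> unfolding alg_lambda_closed_form c_def D_def by simp
  moreover have "real N * alg_lambda n N r mus (length mus) > exp (D - 2)"
    using run assms(4) unfolding alg1_run_def D_def by auto
  ultimately have "(D - 2) * c < (D - 2) * (\<Sum>i\<in>set mus. real (r i))"
    using \<open>c > 0\<close> by (simp add: field_simps)
  then show ?thesis
    using \<open>D > 2\<close> unfolding c_def by simp
qed

lemma alg1_run_value_bound:
  assumes run: "alg1_run n N r v mus"
    and r_pos: "\<forall>i\<in>{1..n}. r i > 0" and v_nonneg: "\<forall>i\<in>{1..n}. v i \<ge> 0"
    and "max_req n r > 0" "N > 2 * max_req n r"
    and feasible: "wdp_feasible n N Br r a x"
  shows "wdp_value n v x
           \<le> wdp_value n v (alg1_x mus) * real N / (real N - 2 * real (max_req n r))"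
proof -
  define S where "S = set mus"
  define p where "p = sum v S"
  define R where "R = (\<Sum>i\<in>S. real (r i))"
  define c where "c = real N - 2 * real (max_req n r)"
  have "S \<subseteq> {1..n}" using alg1_run_chosen_subset[OF run] unfolding S_def .
  have "0 < c" "c \<le> real N" using assms(5) unfolding c_def by linarith+
  have "0 \<le> p" unfolding p_def using v_nonneg \<open>S \<subseteq> {1..n}\<close> by (intro sum_nonneg) auto
  have x_range: "\<forall>i\<in>{1..n}. 0 \<le> real (x i) \<and> real (x i) \<le> 1"
    using wdp_feasible_binary[OF feasible] by fastforce
  have "real (\<Sum>i=1..n. r i * x i) \<le> real N"
    using wdp_feasible_capacity[OF feasible] by linarith
  then have capacity: "(\<Sum>i\<in>{1..n}. real (r i) * real (x i)) \<le> real N" by simp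
  note knapsack = fractional_knapsack_threshold_bound[OF _ \<open>S \<subseteq> {1..n}\<close> x_range capacity]
  have "wdp_value n v x \<le> p * real N / c"
  proof (cases "S = {1..n}")
    case True
    have "wdp_value n v x \<le> p + 0 * (real N - R)"
      using knapsack[of 0 v] v_nonneg True unfolding wdp_value_def p_def R_def by simp
    also have "\<dots> \<le> p * real N / c"
      using \<open>0 \<le> p\<close> \<open>0 < c\<close> \<open>c \<le> real N\<close> by (simp add: le_divide_eq mult_left_mono)
    finally show ?thesis .
  next
    case False
    have "c < R"
      using alg1_run_stopped_demand[OF run assms(4,5)] False unfolding S_def R_def c_def by simp
    then have "mus \<noteq> []" using \<open>0 < c\<close> unfolding R_def S_def by auto
    define d where "d = v (last mus) / real (r (last mus))"
    have "last mus \<in> {1..n}"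
      using last_in_set[OF \<open>mus \<noteq> []\<close>] \<open>S \<subseteq> {1..n}\<close> unfolding S_def by blast
    then have "0 \<le> d" unfolding d_def using v_nonneg by simp
    have above: "\<forall>i\<in>S. d * real (r i) \<le> v i"
      using alg1_run_last_density_le[OF run] r_pos \<open>S \<subseteq> {1..n}\<close>
      unfolding d_def S_def by (auto simp: pos_le_divide_eq subset_iff)
    have below: "\<forall>i\<in>{1..n} - S. v i \<le> d * real (r i)"
      using alg1_run_density_le_last[OF run \<open>mus \<noteq> []\<close>] r_pos
      unfolding d_def S_def by (auto simp: pos_divide_le_eq)
    have "d * R \<le> p"
      unfolding R_def p_def sum_distrib_left using above by (intro sum_mono) auto
    have "wdp_value n v x \<le> p + d * (real N - R)"
      using knapsack[OF _ above below \<open>0 \<le> d\<close>] unfolding wdp_value_def p_def R_def by simp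
    also have "\<dots> \<le> p * real N / c"
      using threshold_excess_le_scaled[OF \<open>0 \<le> d\<close> \<open>d * R \<le> p\<close> \<open>0 < c\<close> \<open>c < R\<close> \<open>c \<le> real N\<close>] .
    finally show ?thesis .
  qed
  then show ?thesis
    using wdp_value_alg1_x[OF \<open>S \<subseteq> {1..n}\<close>[unfolded S_def]] unfolding p_def S_def c_def by simp
qed

lemma approx_ratio_le:
  fixes D :: real
  assumes "D > 2"
  shows "(D - 2) / (D * exp 1 - 2) \<le> (D - 2) / D"
proof -
  have "D * 2 \<le> D * exp 1"
    using assms exp_ge_add_one_self[of 1] by (intro mult_left_mono) auto
  then have "D \<le> D * exp 1 - 2" using assms by linarith
  moreover have "0 < (D * exp 1 - 2) * D" using assms calculation by simp
  ultimately show ?thesis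
    using assms by (intro divide_left_mono) auto
qed

lemma delta_ratio:
  assumes "max_req n r > 0"
  shows "(delta n N r - 2) / delta n N r = (real N - 2 * real (max_req n r)) / real N"
  using assms unfolding delta_def by (cases "N = 0") (auto simp: field_simps)

theorem theorem4:
  fixes n N :: nat and Br :: "nat set" and r :: "nat \<Rightarrow> nat" and v :: "nat \<Rightarrow> real"
    and mus :: "nat list"
  assumes "n \<ge> 1"
    and "Br \<subseteq> {1..n}"
    and "\<forall>i\<in>{1..n}. r i > 0"
    and "\<forall>i\<in>{1..n}. v i \<ge> 0"
    and "N > 2 * max_req n r"
    and "alg1_run n N r v mus"
  shows "wdp_value n v (alg1_x mus) \<ge>
           (delta n N r - 2) / (delta n N r * exp 1 - 2) * wdp_opt n N Br r v"
proof -
  define D where "D = delta n N r"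
  define p where "p = wdp_value n v (alg1_x mus)"
  define c where "c = real N - 2 * real (max_req n r)"
  have m_pos: "max_req n r > 0" using max_req_pos[OF assms(1,3)] .
  have "D > 2" unfolding D_def using delta_gt_two[OF m_pos assms(5)] .
  have "0 < c" "0 < real N" using assms(5) unfolding c_def by linarith+
  have "0 \<le> p"
    unfolding p_def wdp_value_alg1_x[OF alg1_run_chosen_subset[OF assms(6)]]
    using alg1_run_chosen_subset[OF assms(6)] assms(4) by (intro sum_nonneg) auto
  have opt: "wdp_opt n N Br r v \<le> p * real N / c"
    using wdp_opt_le alg1_run_value_bound[OF assms(6,3,4) m_pos assms(5)]
    unfolding p_def c_def by blast
  have ratio: "(D - 2) / (D * exp 1 - 2) \<le> c / real N"
    using approx_ratio_le[OF \<open>D > 2\<close>] delta_ratio[OF m_pos] unfolding D_def c_def by simp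
  have "0 \<le> (D - 2) / (D * exp 1 - 2)"
    using \<open>D > 2\<close> exp_gt_one[of 1] by (intro divide_nonneg_pos) (simp_all add: less_trans[of 2 D])
  then have "(D - 2) / (D * exp 1 - 2) * wdp_opt n N Br r v
             \<le> (D - 2) / (D * exp 1 - 2) * (p * real N / c)"
    by (rule mult_left_mono[OF opt])
  also have "\<dots> \<le> c / real N * (p * real N / c)"
    using ratio \<open>0 \<le> p\<close> \<open>0 < c\<close> by (intro mult_right_mono) auto
  also have "\<dots> = p" using \<open>0 < c\<close> \<open>0 < real N\<close> by simp
  finally show ?thesis unfolding D_def p_def .
qed

end
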